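(* Let $p_x$ be given, $\beta\in\mathbb{R}$, and let $G(p_{z|x}):=(\beta-1)H(Z)+H(Z|X)$, where $p_z=Q_xp_{z|x}$. If $p_{z|x}$ ranges over $\varepsilon_{z|x}$-infimal conditional pmf vectors, then $G$ is $\sigma_G$-weakly convex with respect to $p_{z|x}$ on this set, where $$\sigma_G:=\max\Big\{\frac{2|\beta-1|N_z}{\varepsilon_{z|x}},\ \frac{2N_zN_x}{\varepsilon_{z|x}}\Big\}.$$
   Context: Finite alphabets $\mathcal{X},\mathcal{Z}$ with $N_x,N_z$ elements, $p(x)>0$ given. $p_{z|x}=(p(z_1|x_1),\dots,p(z_1|x_{N_x}),p(z_2|x_1),\dots,p(z_{N_z}|x_{N_x}))^T$ with $\sum_zp(z|x)=1$ for each $x$; $Q_x:=I_{N_z}\otimes p_x^T$ so that $p_z=Q_xp_{z|x}$ is the marginal $p(z)=\sum_xp(z|x)p(x)$. $H(Z)=-\sum_zp(z)\log p(z)$, $H(Z|X)=-\sum_xp(x)\sum_zp(z|x)\log p(z|x)$. A conditional pmf vector is $\varepsilon$-infimal if its smallest entry equals $\varepsilon>0$ (all entries are $\ge\varepsilon$). $f$ is $\sigma$-weakly convex on a set $S$ if $f(y)\ge f(x)+\langle\nabla f(x),y-x\rangle-\frac\sigma2\|y-x\|^2$ for all $x,y\in S$ (Euclidean norm). *)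

theory Defs
  imports "HOL-Analysis.Analysis"
begin

definition cond_pmf :: "real ^ ('z::finite \<times> 'x::finite) \<Rightarrow> bool" where
  "cond_pmf q \<longleftrightarrow> (\<forall>i. q $ i \<ge> 0) \<and> (\<forall>x. (\<Sum>z\<in>UNIV. q $ (z, x)) = 1)"

definition infimal :: "real \<Rightarrow> real ^ ('z::finite \<times> 'x::finite) \<Rightarrow> bool" where
  "infimal \<epsilon> q \<longleftrightarrow> cond_pmf q \<and> Min (range (\<lambda>i. q $ i)) = \<epsilon>"

definition marg :: "('x::finite \<Rightarrow> real) \<Rightarrow> real ^ ('z::finite \<times> 'x) \<Rightarrow> 'z \<Rightarrow> real" where
  "marg px q z = (\<Sum>x\<in>UNIV. q $ (z, x) * px x)"

definition entZ :: "('x::finite \<Rightarrow> real) \<Rightarrow> real ^ ('z::finite \<times> 'x) \<Rightarrow> real" where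
  "entZ px q = - (\<Sum>z\<in>UNIV. marg px q z * ln (marg px q z))"

definition entZX :: "('x::finite \<Rightarrow> real) \<Rightarrow> real ^ ('z::finite \<times> 'x) \<Rightarrow> real" where
  "entZX px q = - (\<Sum>x\<in>UNIV. px x * (\<Sum>z\<in>UNIV. q $ (z, x) * ln (q $ (z, x))))"

definition weakly_convex_on :: "'a::real_inner set \<Rightarrow> ('a \<Rightarrow> real) \<Rightarrow> real \<Rightarrow> bool" where
  "weakly_convex_on S f \<sigma> \<longleftrightarrow>
     (\<forall>x\<in>S. \<exists>D. (GDERIV f x :> D) \<and>
        (\<forall>y\<in>S. f y \<ge> f x + inner D (y - x) - \<sigma> / 2 * (norm (y - x))\<^sup>2))"

end

theory Submission
  imports Defs
begin

text \<open>Write \<open>\<phi>(t) = t ln t\<close>. Both entropies are (negated) sums of \<open>\<phi>\<close>, so \<open>G(q) - G(p) - \<nabla>G(p)\<cdot>(q - p)\<close>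
  equals \<open>-(\<beta> - 1) A - B\<close>, where \<open>A\<close> and \<open>B\<close> are sums of Bregman divergences of \<open>\<phi>\<close>, over the
  marginals and over the conditional entries weighted by \<open>p(x)\<close>. Since \<open>0 \<le> D\<^sub>\<phi>(a, b) \<le> (b - a)\<^sup>2 / a\<close>
  and all entries and marginals are at least \<open>\<epsilon>\<close>, Jensen's inequality for the marginals gives
  \<open>0 \<le> A, B \<le> \<parallel>q - p\<parallel>\<^sup>2 / \<epsilon>\<close>. Hence \<open>G\<close> is \<open>2(|\<beta> - 1| + 1)/\<epsilon>\<close>-weakly convex, and this constant
  is at most \<open>\<sigma>\<^sub>G\<close> as soon as \<open>N\<^sub>z \<ge> 2\<close>; for \<open>N\<^sub>z = 1\<close> the set of conditional pmfs is a single point.\<close>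

definition bregman_xlnx :: "real \<Rightarrow> real \<Rightarrow> real" where
  "bregman_xlnx a b = b * ln b - a * ln a - (ln a + 1) * (b - a)"

lemma bregman_xlnx_eq:
  assumes "a > 0" "b > 0"
  shows "bregman_xlnx a b = b * ln (b / a) - (b - a)"
  using assms by (simp add: bregman_xlnx_def ln_div algebra_simps)

lemma bregman_xlnx_nonneg:
  assumes "a > 0" "b > 0"
  shows "0 \<le> bregman_xlnx a b"
proof -
  have "ln (a / b) \<le> a / b - 1" using assms by (intro ln_le_minus_one) simp
  hence "1 - a / b \<le> ln (b / a)" using assms by (simp add: ln_div)
  hence "b * (1 - a / b) \<le> b * ln (b / a)" using assms by (intro mult_left_mono) auto
  moreover have "b * (1 - a / b) = b - a" using assms by (simp add: field_simps)
  ultimately show ?thesis using assms by (simp add: bregman_xlnx_eq)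
qed

lemma bregman_xlnx_le:
  assumes "e \<le> a" "b > 0" "e > 0"
  shows "bregman_xlnx a b \<le> (b - a)\<^sup>2 / e"
proof -
  have a: "a > 0" using assms by simp
  have "ln (b / a) \<le> b / a - 1" using a assms by (intro ln_le_minus_one) simp
  hence "b * ln (b / a) \<le> b * (b / a - 1)" using assms by (intro mult_left_mono) auto
  hence "bregman_xlnx a b \<le> b * (b / a - 1) - (b - a)" using a assms by (simp add: bregman_xlnx_eq)
  also have "\<dots> = (b - a)\<^sup>2 / a" using a by (simp add: field_simps power2_eq_square)
  also have "\<dots> \<le> (b - a)\<^sup>2 / e" using assms by (intro divide_left_mono) auto
  finally show ?thesis .
qed

lemma weighted_mean_square_le:
  fixes w d :: "'a \<Rightarrow> real"
  assumes "finite A" "\<forall>i\<in>A. 0 \<le> w i" "sum w A = 1"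
  shows "(\<Sum>i\<in>A. w i * d i)\<^sup>2 \<le> (\<Sum>i\<in>A. w i * (d i)\<^sup>2)"
proof -
  define m where "m = (\<Sum>i\<in>A. w i * d i)"
  have "0 \<le> (\<Sum>i\<in>A. w i * (d i - m)\<^sup>2)" using assms by (intro sum_nonneg) auto
  also have "\<dots> = (\<Sum>i\<in>A. w i * (d i)\<^sup>2) - 2 * m * (\<Sum>i\<in>A. w i * d i) + m\<^sup>2 * sum w A"
    by (simp add: power2_eq_square algebra_simps sum.distrib sum_subtractf sum_distrib_left
        sum_distrib_right)
  also have "\<dots> = (\<Sum>i\<in>A. w i * (d i)\<^sup>2) - m\<^sup>2" using assms by (simp add: m_def power2_eq_square)
  finally show ?thesis by (simp add: m_def)
qed

lemma has_derivative_xlnx: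
  fixes g :: "'a::real_normed_vector \<Rightarrow> real"
  assumes "(g has_derivative g') (at p)" "g p > 0"
  shows "((\<lambda>q. g q * ln (g q)) has_derivative (\<lambda>h. (ln (g p) + 1) * g' h)) (at p)"
proof -
  have "((\<lambda>q. g q * ln (g q)) has_derivative
      (\<lambda>h. g p * (g' h * inverse (g p)) + g' h * ln (g p))) (at p)"
    by (rule has_derivative_mult[OF assms(1) has_derivative_ln[OF assms(2) assms(1)]])
  moreover have "(\<lambda>h. g p * (g' h * inverse (g p)) + g' h * ln (g p)) = (\<lambda>h. (ln (g p) + 1) * g' h)"
    using assms(2) by (auto simp: field_simps)
  ultimately show ?thesis by simp
qed

lemma sum_UNIV_prod:
  fixes g :: "'z::finite \<times> 'x::finite \<Rightarrow> real"
  shows "(\<Sum>i\<in>UNIV. g i) = (\<Sum>z\<in>UNIV. \<Sum>x\<in>UNIV. g (z, x))"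
  by (simp add: sum.cartesian_product)

lemma norm_pow_2_prod_index:
  "(norm (d :: real ^ ('z::finite \<times> 'x::finite)))\<^sup>2 = (\<Sum>z\<in>UNIV. \<Sum>x\<in>UNIV. (d $ (z, x))\<^sup>2)"
  unfolding power2_norm_eq_inner inner_vec_def by (simp add: sum_UNIV_prod power2_eq_square)

lemma has_derivative_marg:
  "((\<lambda>q. marg px q z) has_derivative (\<lambda>h. marg px h z)) F"
  unfolding marg_def
  by (intro has_derivative_sum has_derivative_mult_left bounded_linear_imp_has_derivative
      bounded_linear_vec_nth)

lemma marg_diff: "marg px (q - p) z = marg px q z - marg px p z"
  unfolding marg_def by (simp add: algebra_simps sum_subtractf)

lemma marg_ge:
  assumes "\<forall>x. 0 \<le> px x" "(\<Sum>x\<in>UNIV. px x) = 1" "\<forall>i. e \<le> q $ i"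
  shows "e \<le> marg px q z"
proof -
  have "(\<Sum>x\<in>UNIV. e * px x) \<le> (\<Sum>x\<in>UNIV. q $ (z, x) * px x)"
    using assms by (intro sum_mono mult_right_mono) auto
  with assms(2) show ?thesis by (simp add: marg_def sum_distrib_left[symmetric])
qed

lemma pmf_le_1:
  fixes px :: "'x::finite \<Rightarrow> real"
  assumes "\<forall>x. 0 \<le> px x" "(\<Sum>x\<in>UNIV. px x) = 1"
  shows "px x \<le> 1"
  using member_le_sum[of x UNIV px] assms by simp

definition entZ_deriv ::
    "('x::finite \<Rightarrow> real) \<Rightarrow> real ^ ('z::finite \<times> 'x) \<Rightarrow> real ^ ('z \<times> 'x) \<Rightarrow> real" where
  "entZ_deriv px p h = - (\<Sum>z\<in>UNIV. (ln (marg px p z) + 1) * marg px h z)"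

definition entZX_deriv ::
    "('x::finite \<Rightarrow> real) \<Rightarrow> real ^ ('z::finite \<times> 'x) \<Rightarrow> real ^ ('z \<times> 'x) \<Rightarrow> real" where
  "entZX_deriv px p h = - (\<Sum>x\<in>UNIV. px x * (\<Sum>z\<in>UNIV. (ln (p $ (z, x)) + 1) * h $ (z, x)))"

lemma has_derivative_entZ:
  assumes "\<forall>z. marg px p z > 0"
  shows "(entZ px has_derivative entZ_deriv px p) (at p)"
proof -
  have "((\<lambda>q. \<Sum>z\<in>UNIV. marg px q z * ln (marg px q z)) has_derivative
      (\<lambda>h. \<Sum>z\<in>UNIV. (ln (marg px p z) + 1) * marg px h z)) (at p)"
    using assms by (intro has_derivative_sum has_derivative_xlnx has_derivative_marg) auto
  then show ?thesis
    unfolding entZ_def[abs_def] entZ_deriv_def[abs_def] by (rule has_derivative_minus)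
qed

lemma has_derivative_entZX:
  assumes "\<forall>i. p $ i > 0"
  shows "(entZX px has_derivative entZX_deriv px p) (at p)"
proof -
  have "((\<lambda>q. \<Sum>x\<in>UNIV. px x * (\<Sum>z\<in>UNIV. q $ (z, x) * ln (q $ (z, x)))) has_derivative
      (\<lambda>h. \<Sum>x\<in>UNIV. px x * (\<Sum>z\<in>UNIV. (ln (p $ (z, x)) + 1) * h $ (z, x)))) (at p)"
    using assms
    by (intro has_derivative_sum has_derivative_mult_right has_derivative_xlnx
        bounded_linear_imp_has_derivative bounded_linear_vec_nth) auto
  then show ?thesis
    unfolding entZX_def[abs_def] entZX_deriv_def[abs_def] by (rule has_derivative_minus)
qed

lemma entZ_bregman:
  "entZ px q - entZ px p - entZ_deriv px p (q - p)
     = - (\<Sum>z\<in>UNIV. bregman_xlnx (marg px p z) (marg px q z))"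
  unfolding entZ_def entZ_deriv_def bregman_xlnx_def marg_diff
  by (simp add: sum_subtractf sum.distrib[symmetric] algebra_simps)

lemma entZX_bregman:
  "entZX px q - entZX px p - entZX_deriv px p (q - p)
     = - (\<Sum>x\<in>UNIV. px x * (\<Sum>z\<in>UNIV. bregman_xlnx (p $ (z, x)) (q $ (z, x))))"
proof -
  have "(\<Sum>z\<in>UNIV. bregman_xlnx (p $ (z, x)) (q $ (z, x)))
      = (\<Sum>z\<in>UNIV. q $ (z, x) * ln (q $ (z, x))) - (\<Sum>z\<in>UNIV. p $ (z, x) * ln (p $ (z, x)))
        - (\<Sum>z\<in>UNIV. (ln (p $ (z, x)) + 1) * (q - p) $ (z, x))" for x
    by (simp add: bregman_xlnx_def sum_subtractf)
  then show ?thesis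
    unfolding entZX_def entZX_deriv_def by (simp add: right_diff_distrib sum_subtractf)
qed

lemma sum_bregman_marg_nonneg:
  assumes "\<forall>x. 0 \<le> px x" "(\<Sum>x\<in>UNIV. px x) = 1" "\<epsilon> > 0" "\<forall>i. \<epsilon> \<le> p $ i" "\<forall>i. \<epsilon> \<le> q $ i"
  shows "0 \<le> (\<Sum>z\<in>UNIV. bregman_xlnx (marg px p z) (marg px q z))"
  using marg_ge[OF assms(1,2,4)] marg_ge[OF assms(1,2,5)] assms(3)
  by (intro sum_nonneg bregman_xlnx_nonneg) (auto intro: less_le_trans)

lemma sum_bregman_marg_le:
  fixes px :: "'x::finite \<Rightarrow> real" and p q :: "real ^ ('z::finite \<times> 'x)"
  assumes px: "\<forall>x. 0 \<le> px x" "(\<Sum>x\<in>UNIV. px x) = 1"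
    and "\<epsilon> > 0" "\<forall>i. \<epsilon> \<le> p $ i" "\<forall>i. \<epsilon> \<le> q $ i"
  shows "(\<Sum>z\<in>UNIV. bregman_xlnx (marg px p z) (marg px q z)) \<le> (norm (q - p))\<^sup>2 / \<epsilon>"
proof -
  have "bregman_xlnx (marg px p z) (marg px q z) \<le> (\<Sum>x\<in>UNIV. ((q - p) $ (z, x))\<^sup>2) / \<epsilon>" for z
  proof -
    have "bregman_xlnx (marg px p z) (marg px q z) \<le> (marg px q z - marg px p z)\<^sup>2 / \<epsilon>"
      using marg_ge[OF px assms(4)] marg_ge[OF px assms(5)] assms(3)
      by (intro bregman_xlnx_le) (auto intro: less_le_trans)
    also have "marg px q z - marg px p z = (\<Sum>x\<in>UNIV. px x * (q - p) $ (z, x))"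
      unfolding marg_def by (simp add: sum_subtractf[symmetric] algebra_simps)
    also have "(\<Sum>x\<in>UNIV. px x * (q - p) $ (z, x))\<^sup>2 \<le> (\<Sum>x\<in>UNIV. px x * ((q - p) $ (z, x))\<^sup>2)"
      using px by (intro weighted_mean_square_le) auto
    also have "\<dots> \<le> (\<Sum>x\<in>UNIV. ((q - p) $ (z, x))\<^sup>2)"
      using px pmf_le_1[OF px] by (intro sum_mono mult_left_le_one_le) auto
    finally show ?thesis using assms(3) by (simp add: divide_right_mono)
  qed
  then have "(\<Sum>z\<in>UNIV. bregman_xlnx (marg px p z) (marg px q z))
      \<le> (\<Sum>z\<in>UNIV. (\<Sum>x\<in>UNIV. ((q - p) $ (z, x))\<^sup>2) / \<epsilon>)"
    by (intro sum_mono)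
  then show ?thesis by (simp add: norm_pow_2_prod_index sum_divide_distrib)
qed

lemma sum_bregman_cond_le:
  fixes px :: "'x::finite \<Rightarrow> real" and p q :: "real ^ ('z::finite \<times> 'x)"
  assumes px: "\<forall>x. 0 \<le> px x" "(\<Sum>x\<in>UNIV. px x) = 1"
    and "\<epsilon> > 0" "\<forall>i. \<epsilon> \<le> p $ i" "\<forall>i. \<epsilon> \<le> q $ i"
  shows "(\<Sum>x\<in>UNIV. px x * (\<Sum>z\<in>UNIV. bregman_xlnx (p $ (z, x)) (q $ (z, x))))
     \<le> (norm (q - p))\<^sup>2 / \<epsilon>"
proof -
  have "px x * (\<Sum>z\<in>UNIV. bregman_xlnx (p $ (z, x)) (q $ (z, x)))
      \<le> (\<Sum>z\<in>UNIV. ((q - p) $ (z, x))\<^sup>2 / \<epsilon>)" for x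
  proof -
    have "px x * (\<Sum>z\<in>UNIV. bregman_xlnx (p $ (z, x)) (q $ (z, x)))
        \<le> (\<Sum>z\<in>UNIV. bregman_xlnx (p $ (z, x)) (q $ (z, x)))"
      using assms pmf_le_1[OF px]
      by (intro mult_left_le_one_le sum_nonneg bregman_xlnx_nonneg) (auto intro: less_le_trans)
    also have "\<dots> \<le> (\<Sum>z\<in>UNIV. ((q - p) $ (z, x))\<^sup>2 / \<epsilon>)"
      using assms by (intro sum_mono) (auto intro!: bregman_xlnx_le intro: less_le_trans)
    finally show ?thesis .
  qed
  then have "(\<Sum>x\<in>UNIV. px x * (\<Sum>z\<in>UNIV. bregman_xlnx (p $ (z, x)) (q $ (z, x))))
      \<le> (\<Sum>x\<in>UNIV. \<Sum>z\<in>UNIV. ((q - p) $ (z, x))\<^sup>2 / \<epsilon>)"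
    by (intro sum_mono)
  also have "\<dots> = (\<Sum>z\<in>UNIV. \<Sum>x\<in>UNIV. ((q - p) $ (z, x))\<^sup>2) / \<epsilon>"
    by (subst sum.swap) (simp add: sum_divide_distrib)
  finally show ?thesis by (simp add: norm_pow_2_prod_index)
qed

definition grad_objective ::
    "real \<Rightarrow> ('x::finite \<Rightarrow> real) \<Rightarrow> real ^ ('z::finite \<times> 'x) \<Rightarrow> real ^ ('z \<times> 'x)" where
  "grad_objective \<beta> px p =
     (\<chi> i. - px (snd i) * ((\<beta> - 1) * (ln (marg px p (fst i)) + 1) + ln (p $ i) + 1))"

lemma inner_grad_objective:
  "inner h (grad_objective \<beta> px p) = (\<beta> - 1) * entZ_deriv px p h + entZX_deriv px p h"
proof -
  have "inner h (grad_objective \<beta> px p)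
      = (\<Sum>z\<in>UNIV. \<Sum>x\<in>UNIV. (\<beta> - 1) * - ((ln (marg px p z) + 1) * (h $ (z, x) * px x))
          - px x * ((ln (p $ (z, x)) + 1) * h $ (z, x)))"
    unfolding inner_vec_def grad_objective_def sum_UNIV_prod
    by (intro sum.cong refl) (simp add: algebra_simps)
  also have "\<dots> = (\<beta> - 1) * - (\<Sum>z\<in>UNIV. \<Sum>x\<in>UNIV. (ln (marg px p z) + 1) * (h $ (z, x) * px x))
      - (\<Sum>z\<in>UNIV. \<Sum>x\<in>UNIV. px x * ((ln (p $ (z, x)) + 1) * h $ (z, x)))"
    by (simp only: sum_subtractf sum_distrib_left[symmetric] sum_negf)
  also have "\<dots> = (\<beta> - 1) * entZ_deriv px p h + entZX_deriv px p h"
    unfolding entZ_deriv_def entZX_deriv_def marg_def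
    by (subst (2) sum.swap) (simp add: sum_distrib_left)
  finally show ?thesis .
qed

lemma has_derivative_objective:
  assumes "\<forall>i. p $ i > 0" "\<forall>z. marg px p z > 0"
  shows "((\<lambda>q. (\<beta> - 1) * entZ px q + entZX px q)
           has_derivative (\<lambda>h. inner h (grad_objective \<beta> px p))) (at p)"
  unfolding inner_grad_objective
  using assms by (intro has_derivative_add has_derivative_mult_right has_derivative_entZ
      has_derivative_entZX)

lemma objective_lower_bound:
  fixes px :: "'x::finite \<Rightarrow> real" and p q :: "real ^ ('z::finite \<times> 'x)"
  assumes "\<forall>x. 0 \<le> px x" "(\<Sum>x\<in>UNIV. px x) = 1"
    and "\<epsilon> > 0" "\<forall>i. \<epsilon> \<le> p $ i" "\<forall>i. \<epsilon> \<le> q $ i"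
  shows "(\<beta> - 1) * entZ px p + entZX px p + inner (grad_objective \<beta> px p) (q - p)
           - (\<bar>\<beta> - 1\<bar> + 1) / \<epsilon> * (norm (q - p))\<^sup>2
         \<le> (\<beta> - 1) * entZ px q + entZX px q"
proof -
  define A where "A = (\<Sum>z\<in>UNIV. bregman_xlnx (marg px p z) (marg px q z))"
  define B where "B = (\<Sum>x\<in>UNIV. px x * (\<Sum>z\<in>UNIV. bregman_xlnx (p $ (z, x)) (q $ (z, x))))"
  define n where "n = (norm (q - p))\<^sup>2 / \<epsilon>"
  have "(\<beta> - 1) * entZ px q + entZX px q - ((\<beta> - 1) * entZ px p + entZX px p)
          - inner (grad_objective \<beta> px p) (q - p)
        = (\<beta> - 1) * (entZ px q - entZ px p - entZ_deriv px p (q - p))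
          + (entZX px q - entZX px p - entZX_deriv px p (q - p))"
    by (simp add: inner_commute inner_grad_objective algebra_simps)
  also have "\<dots> = - ((\<beta> - 1) * A) - B"
    unfolding entZ_bregman entZX_bregman A_def B_def by simp
  finally have identity: "(\<beta> - 1) * entZ px q + entZX px q - ((\<beta> - 1) * entZ px p + entZX px p)
      - inner (grad_objective \<beta> px p) (q - p) = - ((\<beta> - 1) * A) - B" .
  have "0 \<le> A" "A \<le> n"
    unfolding A_def n_def using sum_bregman_marg_nonneg[OF assms] sum_bregman_marg_le[OF assms] .
  then have "(\<beta> - 1) * A \<le> \<bar>\<beta> - 1\<bar> * n"
    by (metis abs_ge_self abs_ge_zero mult_mono)
  moreover have "B \<le> n" unfolding B_def n_def by (rule sum_bregman_cond_le[OF assms])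
  moreover have "(\<bar>\<beta> - 1\<bar> + 1) / \<epsilon> * (norm (q - p))\<^sup>2 = \<bar>\<beta> - 1\<bar> * n + n"
    by (simp add: n_def field_simps add_divide_distrib)
  ultimately show ?thesis using identity by linarith
qed

lemma weak_convexity_constant_le:
  fixes b e nz nx :: real
  assumes "2 \<le> nz" "1 \<le> nx" "0 < e"
  shows "(\<bar>b\<bar> + 1) / e \<le> max (2 * \<bar>b\<bar> * nz / e) (2 * nz * nx / e) / 2"
proof -
  have "\<bar>b\<bar> + 1 \<le> max (\<bar>b\<bar> * nz) (nz * nx)"
  proof (cases "\<bar>b\<bar> \<le> 1")
    case True
    have "2 \<le> nz * nx" using assms mult_mono[of 2 nz 1 nx] by simp
    with True show ?thesis by linarith
  next
    case False
    have "\<bar>b\<bar> * 2 \<le> \<bar>b\<bar> * nz" using assms by (intro mult_left_mono) auto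
    with False show ?thesis by linarith
  qed
  then have "(\<bar>b\<bar> + 1) / e \<le> max (\<bar>b\<bar> * nz) (nz * nx) / e"
    using assms by (intro divide_right_mono) auto
  also have "\<dots> = max (2 * \<bar>b\<bar> * nz / e) (2 * nz * nx / e) / 2"
    using assms by (simp add: max_def field_simps)
  finally show ?thesis .
qed

lemma infimal_le_nth:
  assumes "infimal \<epsilon> q"
  shows "\<epsilon> \<le> q $ i"
  using assms Min_le[of "range (\<lambda>i. q $ i)" "q $ i"] unfolding infimal_def by simp

lemma cond_pmf_unique_of_card_1:
  fixes p q :: "real ^ ('z::finite \<times> 'x::finite)"
  assumes "CARD('z) = 1" "cond_pmf p" "cond_pmf q"
  shows "q = p"
proof -
  obtain z0 :: 'z where UNIV_z: "UNIV = {z0}" using assms(1) card_1_singletonE by blast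
  then have "q $ (z0, x) = 1" "p $ (z0, x) = 1" for x
    using assms(2,3) unfolding cond_pmf_def UNIV_z by auto
  with UNIV_z have "q $ (z, x) = p $ (z, x)" for z x by (metis UNIV_I singletonD)
  then show ?thesis by (auto simp: vec_eq_iff)
qed

lemma objective_lower_bound_infimal:
  fixes px :: "'x::finite \<Rightarrow> real" and p q :: "real ^ ('z::finite \<times> 'x)"
  assumes "\<forall>x. 0 \<le> px x" "(\<Sum>x\<in>UNIV. px x) = 1"
    and "\<epsilon> > 0" "infimal \<epsilon> p" "infimal \<epsilon> q"
  shows "(\<beta> - 1) * entZ px p + entZX px p + inner (grad_objective \<beta> px p) (q - p)
           - max (2 * \<bar>\<beta> - 1\<bar> * real CARD('z) / \<epsilon>) (2 * real CARD('z) * real CARD('x) / \<epsilon>) / 2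
             * (norm (q - p))\<^sup>2
         \<le> (\<beta> - 1) * entZ px q + entZX px q"
proof (cases "CARD('z) = 1")
  case True
  with assms have "q = p" by (intro cond_pmf_unique_of_card_1) (auto simp: infimal_def)
  then show ?thesis by simp
next
  case False
  have "0 < CARD('z)" "0 < CARD('x)" by (simp_all add: finite_UNIV_card_ge_0)
  with False have "2 \<le> CARD('z)" by linarith
  with \<open>0 < CARD('x)\<close> have "2 \<le> real CARD('z)" "1 \<le> real CARD('x)" by simp_all
  from weak_convexity_constant_le[OF this \<open>\<epsilon> > 0\<close>]
  have "(\<bar>\<beta> - 1\<bar> + 1) / \<epsilon> * (norm (q - p))\<^sup>2
      \<le> max (2 * \<bar>\<beta> - 1\<bar> * real CARD('z) / \<epsilon>) (2 * real CARD('z) * real CARD('x) / \<epsilon>) / 2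
        * (norm (q - p))\<^sup>2"
    by (rule mult_right_mono) simp
  moreover have "(\<beta> - 1) * entZ px p + entZX px p + inner (grad_objective \<beta> px p) (q - p)
      - (\<bar>\<beta> - 1\<bar> + 1) / \<epsilon> * (norm (q - p))\<^sup>2 \<le> (\<beta> - 1) * entZ px q + entZX px q"
    using assms by (intro objective_lower_bound) (auto simp: infimal_le_nth)
  ultimately show ?thesis by linarith
qed

theorem mainTheorem7:
  fixes px :: "'x::finite \<Rightarrow> real" and \<beta> \<epsilon> :: real
  assumes "\<forall>x. px x > 0"
    and "(\<Sum>x\<in>UNIV. px x) = 1"
    and "\<epsilon> > 0"
  shows "weakly_convex_on {q :: real ^ ('z::finite \<times> 'x). infimal \<epsilon> q}
           (\<lambda>q. (\<beta> - 1) * entZ px q + entZX px q)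
           (max (2 * \<bar>\<beta> - 1\<bar> * real CARD('z) / \<epsilon>)
                (2 * real CARD('z) * real CARD('x) / \<epsilon>))"
  unfolding weakly_convex_on_def gderiv_def
proof (intro ballI exI conjI)
  have px: "\<forall>x. 0 \<le> px x" "(\<Sum>x\<in>UNIV. px x) = 1" using assms(1,2) by (auto intro: less_imp_le)
  fix p y :: "real ^ ('z \<times> 'x)"
  assume p: "p \<in> {q. infimal \<epsilon> q}"
  then have p_ge: "\<forall>i. \<epsilon> \<le> p $ i" by (simp add: infimal_le_nth)
  show "((\<lambda>q. (\<beta> - 1) * entZ px q + entZX px q)
          has_derivative (\<lambda>h. inner h (grad_objective \<beta> px p))) (at p)"
    using p_ge marg_ge[OF px p_ge] assms(3)
    by (intro has_derivative_objective) (auto intro: less_le_trans)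
  assume "y \<in> {q. infimal \<epsilon> q}"
  with p show "(\<beta> - 1) * entZ px p + entZX px p + inner (grad_objective \<beta> px p) (y - p)
      - max (2 * \<bar>\<beta> - 1\<bar> * real CARD('z) / \<epsilon>) (2 * real CARD('z) * real CARD('x) / \<epsilon>) / 2
        * (norm (y - p))\<^sup>2
      \<le> (\<beta> - 1) * entZ px y + entZX px y"
    using objective_lower_bound_infimal[OF px assms(3)] by simp
qed

end
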